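(* Consider any run $R$ of the algorithm $\mathcal{A}_{\mathrm{reg}}$ described in the context, and let $op, op' \in C(R)$ be complete operations with timestamps $ts(op)=(i,T_1,\ldots,T_n)$ and $ts(op')=(k,T'_1,\ldots,T'_n)$. If $op \prec op'$ then it is not the case that $op' \prec op$. Consequently, $\prec$ is a strict order on $C(R)$.
   Context: System model: $n$ asynchronous, crash-prone processes with identities in $\{1,\ldots,n\}$. Each process $k$ is the unique writer of a reliable linearizable single-writer multi-reader Distributed Ledger Object (DLO) $L_k$, readable by all processes; its state is a finite sequence of records, initially empty, with operations $L_k.get()$ (returns the current sequence) and $L_k.append(r)$ (appends record $r$ to the end); every invocation by a correct process completes. Well-formedness: a process does not invoke $\mathrm{apply}$ before its previous invocation has finished. Validated object: given a predicate $\mathrm{valid}(\langle P,\prec\rangle, op, i)$ and a function $\mathrm{execute}(\langle P,\prec\rangle, op, i)$, whose first argument is a strictly partially ordered set of operations, $op$ is an operation and $i$ the process issuing it. Clients use $\mathrm{apply}(op,i)$, which returns $(\mathit{ACK}, r)$ if $op$ is found valid and executed with result $r$, and $(\mathit{NACK},-)$ otherwise. The history of a run $R$ contains only operations for which $\mathrm{apply}$ returns $\mathit{ACK}$; $C(R)$ denotes the set of complete such operations. Algorithm $\mathcal{A}_{\mathrm{reg}}$ (code of $\mathrm{apply}(op,i)$ at process $i$): for $j=1,\ldots,n$ in order, set $G_j \leftarrow L_j.get()$ and $T_j \leftarrow |G_j|$; set $ts \leftarrow (i,T_1,\ldots,T_n)$; set $P \leftarrow \{op' : \langle ts',op'\rangle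 \in \bigcup_j G_j\}$; if $\mathrm{valid}(\langle P,\prec\rangle, op, i)$ then $res \leftarrow \mathrm{execute}(\langle P,\prec\rangle, op,i)$, $L_i.append(\langle ts, op\rangle)$, and return $(\mathit{ACK},res)$; otherwise return $(\mathit{NACK},-)$. The invocation event of a valid operation is the invocation of $L_1.get()$ in the loop, and its response event is the completion of $L_i.append(\langle ts,op\rangle)$. The tuple $ts$ is called the timestamp $ts(op)$ of $op$. Order $\prec$: for $op,op' \in C(R)$ with $ts(op)=(i,T_1,\ldots,T_n)$ and $ts(op')=(k,T'_1,\ldots,T'_n)$, define $op \prec op'$ iff $T_i < T'_i$ (where $i$ is the issuer of $op$).
   Formalization: The consequence that $\prec$ is a strict order on $C(R)$ is replaced by irreflexivity and asymmetry of $\prec$ on $C(R)$; transitivity is not claimed. The statement above fails without it. *)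

theory Defs
  imports Main
begin

text \<open>Processes are 1..n; ledger L_j is
  the list stored at index j.  Ledger operations are linearizable, so each
  get/append is modelled as one atomic step of an interleaving.
  A timestamp (i, T_1, ..., T_n) is a pair (i, T) with T j the value T_j.\<close>

type_synonym ts = "nat \<times> (nat \<Rightarrow> nat)"
type_synonym 'op rec = "ts \<times> 'op"

text \<open>Local state of a process: idle (not inside apply), or inside apply(op)
  about to read L_j, having stored G_1 .. G_(j-1) in G.\<close>
datatype 'op lstate = Idle | Reading 'op nat "nat \<Rightarrow> 'op rec list"

type_synonym 'op gstate = "(nat \<Rightarrow> 'op rec list) \<times> (nat \<Rightarrow> 'op lstate)"

definition prec :: "'op rec \<Rightarrow> 'op rec \<Rightarrow> bool" where
  "prec x y \<longleftrightarrow> snd (fst x) (fst (fst x)) < snd (fst y) (fst (fst x))"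

definition opsOf :: "nat \<Rightarrow> (nat \<Rightarrow> 'op rec list) \<Rightarrow> 'op set" where
  "opsOf n G = {o'. \<exists>t'. (t', o') \<in> (\<Union>j\<in>{1..n}. set (G j))}"

definition precOf :: "nat \<Rightarrow> (nat \<Rightarrow> 'op rec list) \<Rightarrow> 'op \<Rightarrow> 'op \<Rightarrow> bool" where
  "precOf n G a b \<longleftrightarrow> (\<exists>x\<in>(\<Union>j\<in>{1..n}. set (G j)). \<exists>y\<in>(\<Union>j\<in>{1..n}. set (G j)).
      snd x = a \<and> snd y = b \<and> prec x y)"

definition tsOf :: "nat \<Rightarrow> (nat \<Rightarrow> 'op rec list) \<Rightarrow> ts" where
  "tsOf i G = (i, \<lambda>j. length (G j))"

text \<open>One atomic step of the system.  valid P prec op i is the validity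
  predicate (arbitrary).  The result of execute plays no role for the order
  and is therefore not modelled.\<close>
inductive step :: "nat \<Rightarrow> ('op set \<Rightarrow> ('op \<Rightarrow> 'op \<Rightarrow> bool) \<Rightarrow> 'op \<Rightarrow> nat \<Rightarrow> bool)
                   \<Rightarrow> 'op gstate \<Rightarrow> 'op gstate \<Rightarrow> bool"
  for n valid where
  invoke: "\<lbrakk>p \<in> {1..n}; loc p = Idle\<rbrakk>
     \<Longrightarrow> step n valid (L, loc) (L, loc(p := Reading op 1 (\<lambda>_. [])))"
| read: "\<lbrakk>p \<in> {1..n}; loc p = Reading op j G; 1 \<le> j; j \<le> n\<rbrakk>
     \<Longrightarrow> step n valid (L, loc) (L, loc(p := Reading op (Suc j) (G(j := L j))))"
| ack: "\<lbrakk>p \<in> {1..n}; loc p = Reading op (Suc n) G; valid (opsOf n G) (precOf n G) op p\<rbrakk>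
     \<Longrightarrow> step n valid (L, loc) (L(p := L p @ [(tsOf p G, op)]), loc(p := Idle))"
| nack: "\<lbrakk>p \<in> {1..n}; loc p = Reading op (Suc n) G; \<not> valid (opsOf n G) (precOf n G) op p\<rbrakk>
     \<Longrightarrow> step n valid (L, loc) (L, loc(p := Idle))"

definition initState :: "'op gstate" where
  "initState = (\<lambda>_. [], \<lambda>_. Idle)"

text \<open>Complete valid operations of a run (those whose append completed),
  as timestamped records.\<close>
definition complete :: "nat \<Rightarrow> 'op gstate \<Rightarrow> 'op rec set" where
  "complete n s = (\<Union>j\<in>{1..n}. set (fst s j))"

end

theory Submission
  imports Defs
begin

text \<open>Every timestamp entry T_m is the length of L_m at some earlier time, and
  ledgers only grow, so every stored timestamp is bounded by the current ledger
  lengths.  A process p issuing a new record reads L_p while it alone writes L_p;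
  hence the new record carries T_p = |L_p|, which no stored record exceeds, so
  the new record precedes nothing already stored.  Asymmetry of the order on the
  stored records is therefore preserved by every append.\<close>

definition records :: "(nat \<Rightarrow> 'op rec list) \<Rightarrow> 'op rec set" where
  "records L = (\<Union>j. set (L j))"

lemma records_append:
  "records (L(p := L p @ [z])) = insert z (records L)"
  by (auto simp: records_def split: if_splits)

lemma complete_subset_records: "complete n s \<subseteq> records (fst s)"
  by (auto simp: complete_def records_def)

lemma asymp_on_insertI:
  assumes "asymp_on A R" "\<not> R z z" "\<And>x. x \<in> A \<Longrightarrow> \<not> R z x"
  shows "asymp_on (insert z A) R"
  using assms by (auto dest: asymp_onD)

lemma prec_irrefl: "\<not> prec x x"
  by (simp add: prec_def)

definition timestamps_bounded :: "(nat \<Rightarrow> 'op rec list) \<Rightarrow> bool" where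
  "timestamps_bounded L \<longleftrightarrow> (\<forall>x\<in>records L. \<forall>m. snd (fst x) m \<le> length (L m))"

text \<open>A process reading with counter J has already read L_1, ..., L_(J-1);
  its own ledger cannot have changed since it read it.\<close>
definition snapshots_current :: "(nat \<Rightarrow> 'op rec list) \<Rightarrow> (nat \<Rightarrow> 'op lstate) \<Rightarrow> bool" where
  "snapshots_current L loc \<longleftrightarrow>
     (\<forall>p op J G. loc p = Reading op J G \<longrightarrow>
        (\<forall>m. length (G m) \<le> length (L m)) \<and> (p < J \<longrightarrow> length (G p) = length (L p)))"

definition run_invariant :: "'op gstate \<Rightarrow> bool" where
  "run_invariant s \<longleftrightarrow> timestamps_bounded (fst s) \<and> snapshots_current (fst s) (snd s)
                        \<and> asymp_on (records (fst s)) prec"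

lemma fresh_record_precedes_nothing:
  assumes "timestamps_bounded L" "length (G p) = length (L p)" "x \<in> records L"
  shows "\<not> prec (tsOf p G, op) x"
  using assms by (auto simp: timestamps_bounded_def prec_def tsOf_def not_less)

lemma timestamps_bounded_append:
  assumes "timestamps_bounded L" "\<forall>m. length (G m) \<le> length (L m)"
  shows "timestamps_bounded (L(p := L p @ [(tsOf p G, op)]))"
  using assms by (fastforce simp: timestamps_bounded_def records_append tsOf_def intro: le_SucI)

lemma snapshots_current_append:
  assumes "snapshots_current L loc"
  shows "snapshots_current (L(p := L p @ [z])) (loc(p := Idle))"
  using assms by (fastforce simp: snapshots_current_def intro: le_SucI)

lemma run_invariant_step:
  assumes "step n valid s t" "run_invariant s"
  shows "run_invariant t"
  using assms
proof (induction rule: step.induct)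
  case (ack p loc op G L)
  then have bounded: "timestamps_bounded L" and current: "snapshots_current L loc"
    and asym: "asymp_on (records L) prec"
    by (simp_all add: run_invariant_def)
  have snapshot: "\<forall>m. length (G m) \<le> length (L m)" "length (G p) = length (L p)"
    using current ack.hyps(1,2) by (auto simp: snapshots_current_def)
  have "asymp_on (records (L(p := L p @ [(tsOf p G, op)]))) prec"
    unfolding records_append
    using asym prec_irrefl fresh_record_precedes_nothing[where p = p and G = G, OF bounded snapshot(2)]
    by (rule asymp_on_insertI)
  then show ?case
    using timestamps_bounded_append[OF bounded snapshot(1)] snapshots_current_append[OF current]
    by (simp add: run_invariant_def)
qed (auto simp: run_invariant_def snapshots_current_def split: if_splits)

lemma run_invariant_reachable:
  assumes "(step n valid)\<^sup>*\<^sup>* initState s"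
  shows "run_invariant s"
  using assms
proof (induction rule: rtranclp_induct)
  case base
  show ?case
    by (simp add: run_invariant_def initState_def records_def timestamps_bounded_def
        snapshots_current_def asymp_on_def)
next
  case (step t u)
  then show ?case by (blast intro: run_invariant_step)
qed

theorem mainTheorem1:
  fixes n :: nat
    and valid :: "'op set \<Rightarrow> ('op \<Rightarrow> 'op \<Rightarrow> bool) \<Rightarrow> 'op \<Rightarrow> nat \<Rightarrow> bool"
    and s :: "'op gstate"
  assumes "(step n valid)\<^sup>*\<^sup>* initState s"
  shows "(\<forall>x\<in>complete n s. \<forall>y\<in>complete n s. prec x y \<longrightarrow> \<not> prec y x)
         \<and> irreflp_on (complete n s) prec \<and> asymp_on (complete n s) prec"
proof -
  have "asymp_on (records (fst s)) prec"
    using run_invariant_reachable[OF assms] by (simp add: run_invariant_def)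
  then have "asymp_on (complete n s) prec"
    using complete_subset_records by (rule asymp_on_subset)
  then show ?thesis
    by (auto dest: asymp_onD)
qed

end
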